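(* Let $\delta\in\mathbb{C}\setminus\{0\}$ with $\mathrm{Re}(\delta)\ge0$, and let $r\in\mathbb{Z}_{\ge1}$. Then $$P^{\lfloor \mathrm{Re}(\delta)\rfloor+1}\big[X^{\delta}q_r(\alpha)\big](X)\longrightarrow 0\quad\text{classically as } X\to\infty .$$
   Context: For $X>0$ write $X=k+\alpha$ with $k=\lfloor X\rfloor$, $\alpha=X-\lfloor X\rfloor\in[0,1)$; $X^\delta$ is the principal power. $P[f](X)=\frac1X\int_0^X f(x)\,dx$ for locally integrable $f$ on $(0,\infty)$. The polynomials $q_n$ are defined by $q_1(\alpha)=\alpha-\tfrac12$ and, for $n\ge1$, $q_{n+1}$ is the unique polynomial with $q_{n+1}'=q_n$ and $\int_0^1 q_{n+1}(\alpha)\,d\alpha=0$ (e.g. $q_2(\alpha)=\tfrac12\alpha^2-\tfrac12\alpha+\tfrac1{12}$); $q_r(\alpha)$ is regarded as a period-1 function of $X$. *)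

theory Defs
  imports "HOL-Analysis.Analysis"
begin

text \<open>We set q_0 = 1 so that uniformly
  q_(n+1)(a) = int_0^a q_n - c_n with c_n chosen so that int_0^1 q_(n+1) = 0;
  this gives q_1(a) = a - 1/2, q_(n+1)' = q_n and int_0^1 q_(n+1) = 0 on [0,1],
  which determines the polynomials on [0,1] (the only range where they are evaluated).\<close>
fun qpoly :: "nat \<Rightarrow> real \<Rightarrow> real" where
  "qpoly 0 = (\<lambda>_. 1)"
| "qpoly (Suc n) = (\<lambda>a. integral {0..a} (qpoly n)
                         - integral {0..1} (\<lambda>b. integral {0..b} (qpoly n)))"

definition cesaroP :: "(real \<Rightarrow> complex) \<Rightarrow> real \<Rightarrow> complex" where
  "cesaroP f X = integral {0..X} f / of_real X"

end

theory Submission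
  imports Defs
begin

text \<open>Write f(\<beta>, r)(x) = x powr \<beta> * q_r(frac x). For r \<ge> 1 the function q_(r+1)(frac x) is
  continuous, with derivative q_r(frac x) off the integers, so integration by parts gives
  P[f(\<beta>, r)] = f(\<beta> - 1, r + 1) - \<beta> P[f(\<beta> - 1, r + 1)] + O(1/X): each application of P lowers the
  real part of the exponent by one. Once Re \<beta> < 1 the term f(\<beta> - 1, r + 1) tends to 0, and P, being
  a Cesaro mean, preserves the limit 0; induction on the number of applications of P concludes.
  The hypothesis Re \<beta> \<ge> 0 keeps every function involved bounded near 0, where P integrates from.\<close>

lemma continuous_on_qpoly: "continuous_on {0..1} (qpoly n)"
proof (induction n)
  case (Suc n)
  have "continuous_on {0..1} (\<lambda>a. integral {0..a} (qpoly n))"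
    by (intro indefinite_integral_continuous_1 integrable_continuous_interval Suc)
  then show ?case
    by (simp add: continuous_on_diff)
qed simp

lemma qpoly_Suc_has_real_derivative:
  assumes "a \<in> {0<..<1}"
  shows "(qpoly (Suc n) has_real_derivative qpoly n a) (at a)"
proof -
  have "((\<lambda>x. integral {0..x} (qpoly n)) has_real_derivative qpoly n a) (at a within {0..1})"
    using assms by (intro integral_has_real_derivative continuous_on_qpoly) auto
  then have "((\<lambda>x. integral {0..x} (qpoly n)) has_real_derivative qpoly n a) (at a)"
    using assms by (subst (asm) at_within_interior) auto
  then have "((\<lambda>x. integral {0..x} (qpoly n) - integral {0..1} (\<lambda>b. integral {0..b} (qpoly n)))
      has_real_derivative qpoly n a) (at a)"
    by (auto intro!: derivative_eq_intros)
  then show ?thesis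
    by simp
qed

lemma integral_qpoly_Suc: "integral {0..1} (qpoly (Suc n)) = 0"
proof -
  define A where "A = integral {0..1} (\<lambda>b. integral {0..b} (qpoly n))"
  have "(\<lambda>b. integral {0..b} (qpoly n)) integrable_on {0..1}"
    by (intro integrable_continuous_interval indefinite_integral_continuous_1
        integrable_continuous_interval continuous_on_qpoly)
  then have "integral {0..1} (\<lambda>a. integral {0..a} (qpoly n) - A) = A - integral {0..1::real} (\<lambda>_. A)"
    unfolding A_def by (subst integral_diff) auto
  then show ?thesis
    by (simp add: A_def)
qed

lemma qpoly_Suc_Suc_endpoints_eq: "qpoly (Suc (Suc n)) 1 = qpoly (Suc (Suc n)) 0"
  using integral_qpoly_Suc[of n] by simp

lemma bounded_qpoly_frac: "bounded (range (\<lambda>x. qpoly n (frac x)))"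
proof (rule bounded_subset)
  show "bounded (qpoly n ` {0..1})"
    by (intro compact_imp_bounded compact_continuous_image continuous_on_qpoly) auto
  show "range (\<lambda>x. qpoly n (frac x)) \<subseteq> qpoly n ` {0..1}"
  proof (clarsimp)
    fix x :: real
    have "frac x \<in> {0..1}"
      using frac_lt_1[of x] by simp
    then show "qpoly n (frac x) \<in> qpoly n ` {0..1}"
      by (rule imageI)
  qed
qed

lemma isCont_comp_frac:
  fixes g :: "real \<Rightarrow> 'a::topological_space"
  assumes "continuous_on {0..1} g" "g 0 = g 1"
  shows "isCont (\<lambda>x. g (frac x)) x"
proof -
  have on_unit_interval: "continuous_on {of_int m..of_int m + 1} (\<lambda>x. g (frac x))" for m :: int
  proof -
    have "continuous_on {of_int m..of_int m + 1} (\<lambda>x. g (x - of_int m))"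
      by (rule continuous_on_compose2[OF assms(1)]) (auto intro!: continuous_intros)
    moreover have "g (x - of_int m) = g (frac x)" if "x \<in> {of_int m..of_int m + 1}" for x
    proof (cases "x = of_int m + 1")
      case False
      with that have "\<lfloor>x\<rfloor> = m"
        by (simp add: floor_eq_iff)
      then show ?thesis
        by (simp add: frac_def)
    qed (simp add: assms(2))
    ultimately show ?thesis
      by (rule continuous_on_eq)
  qed
  define n where "n = \<lfloor>x\<rfloor>"
  have "continuous_on ({of_int (n - 1)..of_int (n - 1) + 1} \<union> {of_int n..of_int n + 1}) (\<lambda>x. g (frac x))"
    by (intro continuous_on_closed_Un on_unit_interval) auto
  moreover have "{of_int (n - 1)..of_int (n - 1) + 1} \<union> {of_int n..of_int n + 1} = {of_int n - 1..of_int n + (1::real)}"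
    by auto
  moreover have "x \<in> interior {of_int n - 1..of_int n + (1::real)}"
    unfolding n_def interior_atLeastAtMost_real using floor_correct[of x] by simp linarith
  ultimately show ?thesis
    using continuous_on_interior by metis
qed

lemma has_real_derivative_comp_frac:
  assumes "x \<notin> \<int>" "(g has_real_derivative D) (at (frac x))"
  shows "((\<lambda>x. g (frac x)) has_real_derivative D) (at x)"
proof -
  define n where "n = \<lfloor>x\<rfloor>"
  have "(g has_real_derivative D) (at (x - of_int n))"
    using assms(2) by (simp add: n_def frac_def)
  then have "((\<lambda>y. g (y - of_int n)) has_real_derivative D) (at x)"
    by (rule DERIV_chain2[where Db=1, simplified]) (auto intro!: derivative_eq_intros)
  then show ?thesis
  proof (rule has_field_derivative_transform_within_open[where S="{of_int n<..<of_int n + 1}"])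
    show "x \<in> {of_int n<..<of_int n + 1}"
    proof -
      have "of_int n \<noteq> x"
        using assms(1) by (metis Ints_of_int)
      then show ?thesis
        using floor_correct[of x] unfolding n_def by (auto simp: order_le_less)
    qed
    show "g (y - of_int n) = g (frac y)" if "y \<in> {of_int n<..<of_int n + 1}" for y
    proof -
      have "\<lfloor>y\<rfloor> = n"
        using that by (simp add: floor_eq_iff)
      then show ?thesis
        by (simp add: frac_def)
    qed
  qed auto
qed

lemma integrable_on_if_bounded_measurable:
  fixes g :: "real \<Rightarrow> 'a::euclidean_space"
  assumes "g \<in> borel_measurable borel" and "bounded (g ` {a..b})"
  shows "g integrable_on {a..b}"
proof -
  obtain B where B: "\<forall>x\<in>{a..b}. norm (g x) \<le> B"
    using assms(2) by (auto simp: bounded_iff)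
  have "g \<in> borel_measurable (lebesgue_on {a..b})"
    using assms(1) by (intro measurable_restrict_space1 measurable_completion) simp
  then show ?thesis
    by (rule measurable_bounded_by_integrable_imp_integrable[where g="\<lambda>_. B"]) (use B in auto)
qed

definition locally_bounded_integrable :: "(real \<Rightarrow> complex) \<Rightarrow> bool" where
  "locally_bounded_integrable g \<longleftrightarrow> (\<forall>X. g integrable_on {0..X} \<and> bounded (g ` {0..X}))"

lemma locally_bounded_integrable_add:
  "locally_bounded_integrable g \<Longrightarrow> locally_bounded_integrable h \<Longrightarrow>
    locally_bounded_integrable (\<lambda>x. g x + h x)"
  unfolding locally_bounded_integrable_def by (auto intro: integrable_add bounded_plus_comp)

lemma locally_bounded_integrable_cmult:
  assumes "locally_bounded_integrable g"
  shows "locally_bounded_integrable (\<lambda>x. c * g x)"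
proof -
  have "bounded ((\<lambda>x. c * g x) ` {0..X})" for X
    using bounded_linear_image[OF _ bounded_linear_mult_right, of "g ` {0..X}" c] assms
    by (simp add: locally_bounded_integrable_def image_image)
  then show ?thesis
    using assms by (simp add: locally_bounded_integrable_def integrable_on_mult_right)
qed

lemma cesaroP_add:
  "locally_bounded_integrable g \<Longrightarrow> locally_bounded_integrable h \<Longrightarrow>
    cesaroP (\<lambda>x. g x + h x) = (\<lambda>x. cesaroP g x + cesaroP h x)"
  unfolding locally_bounded_integrable_def cesaroP_def by (auto simp: integral_add add_divide_distrib)

lemma cesaroP_cmult: "cesaroP (\<lambda>x. c * g x) = (\<lambda>x. c * cesaroP g x)"
  unfolding cesaroP_def by auto

lemma norm_cesaroP_le:
  assumes "g integrable_on {0..x}" and "0 \<le> B" and "\<And>y. y \<in> {0..x} \<Longrightarrow> norm (g y) \<le> B"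
  shows "norm (cesaroP g x) \<le> B"
proof (cases "x > 0")
  case True
  have "norm (integral {0..x} g) \<le> B * x"
    using integrable_bound[of B g 0 x] assms True by simp
  then show ?thesis
    using True by (simp add: cesaroP_def norm_divide field_simps)
next
  case False
  then have "x = 0 \<or> x < 0"
    by auto
  then show ?thesis
    using assms(2) by (auto simp: cesaroP_def)
qed

lemma isCont_cesaroP:
  assumes "locally_bounded_integrable g" and "x \<noteq> 0"
  shows "isCont (cesaroP g) x"
proof (cases "x > 0")
  case True
  have "continuous_on {0..x + 1} (\<lambda>y. integral {0..y} g)"
    using assms(1) by (intro indefinite_integral_continuous_1) (simp add: locally_bounded_integrable_def)
  then have "isCont (\<lambda>y. integral {0..y} g) x"
    by (rule continuous_on_interior) (use True in auto)
  then show ?thesis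
    unfolding cesaroP_def using True by (intro continuous_intros) auto
next
  case False
  with assms(2) have "\<forall>\<^sub>F y in nhds x. 0 = cesaroP g y"
    by (intro eventually_nhds_in_open[of "{..<0}", THEN eventually_mono]) (auto simp: cesaroP_def)
  then show ?thesis
    using isCont_cong[of "\<lambda>_. 0" "cesaroP g" x] by simp
qed

lemma locally_bounded_integrable_cesaroP:
  assumes "locally_bounded_integrable g"
  shows "locally_bounded_integrable (cesaroP g)"
proof -
  have bounded: "bounded (cesaroP g ` {0..X})" for X
  proof -
    obtain B where B: "B > 0" "\<forall>y\<in>g ` {0..X}. norm y \<le> B"
      using assms unfolding locally_bounded_integrable_def bounded_pos by blast
    have "norm (cesaroP g x) \<le> B" if "x \<in> {0..X}" for x
      using assms that B
      by (intro norm_cesaroP_le) (auto simp: locally_bounded_integrable_def)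
    then show ?thesis
      unfolding bounded_iff by (intro exI[of _ B]) auto
  qed
  have "cesaroP g \<in> borel_measurable borel"
    by (rule borel_measurable_continuous_countable_exceptions[where X="{0}"])
       (auto intro!: continuous_at_imp_continuous_on isCont_cesaroP assms)
  with bounded show ?thesis
    unfolding locally_bounded_integrable_def by (auto intro: integrable_on_if_bounded_measurable)
qed

lemma locally_bounded_integrable_funpow_cesaroP:
  "locally_bounded_integrable g \<Longrightarrow> locally_bounded_integrable ((cesaroP ^^ k) g)"
  by (induction k) (auto intro: locally_bounded_integrable_cesaroP)

lemma funpow_cesaroP_add:
  "locally_bounded_integrable g \<Longrightarrow> locally_bounded_integrable h \<Longrightarrow>
    (cesaroP ^^ k) (\<lambda>x. g x + h x) = (\<lambda>x. (cesaroP ^^ k) g x + (cesaroP ^^ k) h x)"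
  by (induction k) (auto simp: cesaroP_add locally_bounded_integrable_funpow_cesaroP)

lemma funpow_cesaroP_cmult: "(cesaroP ^^ k) (\<lambda>x. c * g x) = (\<lambda>x. c * (cesaroP ^^ k) g x)"
  by (induction k) (auto simp: cesaroP_cmult)

lemma integral_average_tendsto_0:
  fixes g :: "real \<Rightarrow> 'a::{real_normed_field, banach}"
  assumes integrable: "\<And>X. g integrable_on {a..X}" and lim: "(g \<longlongrightarrow> 0) at_top"
  shows "((\<lambda>X. integral {a..X} g / of_real X) \<longlongrightarrow> 0) at_top"
proof (rule tendstoI)
  fix e :: real
  assume "e > 0"
  obtain T0 where T0: "\<And>x. x \<ge> T0 \<Longrightarrow> norm (g x) < e / 2"
    using tendstoD[OF lim, of "e / 2"] \<open>e > 0\<close> by (auto simp: eventually_at_top_linorder)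
  define T where "T = max T0 (max a 1)"
  define C where "C = norm (integral {a..T} g)"
  have "norm (integral {a..X} g / of_real X) < e" if X: "X \<ge> max T (2 * C / e + 1)" for X
  proof -
    have "a \<le> T" "T \<le> X" "0 < X" "C < e / 2 * X"
      using X \<open>e > 0\<close> by (auto simp: T_def field_simps)
    have "norm (integral {T..X} g) \<le> e / 2 * (X - T)"
      using integrable_bound[of "e / 2" g T X] integrable_subinterval_real[OF integrable[of X], of T X]
        T0 \<open>a \<le> T\<close> \<open>T \<le> X\<close> \<open>e > 0\<close> by (force simp: T_def less_imp_le)
    also have "\<dots> \<le> e / 2 * X"
      using \<open>e > 0\<close> by (simp add: T_def)
    finally have "norm (integral {a..T} g + integral {T..X} g) < e * X"
      using norm_triangle_ineq[of "integral {a..T} g" "integral {T..X} g"] \<open>C < e / 2 * X\<close>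
      unfolding C_def by linarith
    then show ?thesis
      using Henstock_Kurzweil_Integration.integral_combine[OF \<open>a \<le> T\<close> \<open>T \<le> X\<close> integrable[of X]] \<open>0 < X\<close>
      by (simp add: norm_divide field_simps)
  qed
  then show "\<forall>\<^sub>F X in at_top. dist (integral {a..X} g / of_real X) 0 < e"
    unfolding eventually_at_top_linorder by (intro exI[of _ "max T (2 * C / e + 1)"]) auto
qed

lemma cesaroP_tendsto_0:
  "locally_bounded_integrable g \<Longrightarrow> (g \<longlongrightarrow> 0) at_top \<Longrightarrow> (cesaroP g \<longlongrightarrow> 0) at_top"
  unfolding cesaroP_def locally_bounded_integrable_def by (rule integral_average_tendsto_0) auto

lemma funpow_cesaroP_tendsto_0:
  "locally_bounded_integrable g \<Longrightarrow> (g \<longlongrightarrow> 0) at_top \<Longrightarrow> ((cesaroP ^^ k) g \<longlongrightarrow> 0) at_top"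
  by (induction k) (auto intro: cesaroP_tendsto_0 locally_bounded_integrable_funpow_cesaroP)

lemma funpow_cesaroP_perturbed_tendsto_0:
  assumes g: "locally_bounded_integrable g" and w: "locally_bounded_integrable w"
    and "((cesaroP ^^ k) g \<longlongrightarrow> 0) at_top" and "(w \<longlongrightarrow> 0) at_top"
  shows "((cesaroP ^^ k) (\<lambda>X. g X + (c * cesaroP g X + w X)) \<longlongrightarrow> 0) at_top"
proof -
  have "(cesaroP ^^ k) (\<lambda>X. g X + (c * cesaroP g X + w X)) =
      (\<lambda>X. (cesaroP ^^ k) g X + (c * cesaroP ((cesaroP ^^ k) g) X + (cesaroP ^^ k) w X))"
    using g w
    by (simp only: funpow_cesaroP_add funpow_cesaroP_cmult funpow_swap1 locally_bounded_integrable_add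
        locally_bounded_integrable_cmult locally_bounded_integrable_cesaroP)
  moreover have "(cesaroP ((cesaroP ^^ k) g) \<longlongrightarrow> 0) at_top"
    using assms by (intro cesaroP_tendsto_0 locally_bounded_integrable_funpow_cesaroP)
  moreover have "((cesaroP ^^ k) w \<longlongrightarrow> 0) at_top"
    using assms by (intro funpow_cesaroP_tendsto_0)
  ultimately show ?thesis
    using assms(3) by (auto intro!: tendsto_eq_intros)
qed

definition powr_qpoly :: "complex \<Rightarrow> nat \<Rightarrow> real \<Rightarrow> complex" where
  "powr_qpoly \<beta> r x = of_real x powr \<beta> * of_real (qpoly r (frac x))"

lemma norm_powr_qpoly:
  "x \<ge> 0 \<Longrightarrow> norm (powr_qpoly \<beta> r x) = x powr Re \<beta> * \<bar>qpoly r (frac x)\<bar>"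
  by (simp add: powr_qpoly_def norm_mult norm_powr_real_powr)

lemma powr_qpoly_divide: "X > 0 \<Longrightarrow> powr_qpoly \<beta> r X / of_real X = powr_qpoly (\<beta> - 1) r X"
  by (simp add: powr_qpoly_def powr_diff)

lemma powr_qpoly_tendsto_0:
  assumes "Re \<beta> < 0"
  shows "(powr_qpoly \<beta> r \<longlongrightarrow> 0) at_top"
proof -
  obtain M where M: "\<And>x. \<bar>qpoly r (frac x)\<bar> \<le> M"
    using bounded_qpoly_frac[of r] by (auto simp: bounded_iff)
  show ?thesis
  proof (rule Lim_null_comparison)
    show "\<forall>\<^sub>F x in at_top. norm (powr_qpoly \<beta> r x) \<le> x powr Re \<beta> * M"
      using eventually_ge_at_top[of 0]
      by eventually_elim (auto simp: norm_powr_qpoly intro!: mult_left_mono M)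
    show "((\<lambda>x. x powr Re \<beta> * M) \<longlongrightarrow> 0) at_top"
      by (intro tendsto_mult_left_zero tendsto_neg_powr[OF assms filterlim_ident])
  qed
qed

lemma qpoly_Suc_frac_has_real_derivative:
  "x \<notin> \<int> \<Longrightarrow> ((\<lambda>x. qpoly (Suc n) (frac x)) has_real_derivative qpoly n (frac x)) (at x)"
  using frac_ge_0[of x] frac_lt_1[of x]
  by (intro has_real_derivative_comp_frac qpoly_Suc_has_real_derivative) (auto simp: order_le_less)

lemma isCont_qpoly_Suc_Suc_frac: "isCont (\<lambda>x. qpoly (Suc (Suc n)) (frac x)) x"
  by (intro isCont_comp_frac continuous_on_qpoly qpoly_Suc_Suc_endpoints_eq[symmetric])

lemma isCont_powr_qpoly:
  assumes "x > 0" and "isCont (\<lambda>x. qpoly r (frac x)) x"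
  shows "isCont (powr_qpoly \<beta> r) x"
  unfolding powr_qpoly_def
  using assms by (intro continuous_intros isCont_powr_complex) (auto simp: complex_nonpos_Reals_iff)

lemma powr_qpoly_has_vector_derivative:
  assumes "x > 0" and "x \<notin> \<int>"
  shows "(powr_qpoly \<beta> (Suc r) has_vector_derivative
            \<beta> * powr_qpoly (\<beta> - 1) (Suc r) x + powr_qpoly \<beta> r x) (at x)"
proof -
  have "complex_of_real x \<notin> \<real>\<^sub>\<le>\<^sub>0"
    using assms(1) by (auto simp: complex_nonpos_Reals_iff)
  then have "((\<lambda>x. complex_of_real x powr \<beta>) has_vector_derivative \<beta> * of_real x powr (\<beta> - 1)) (at x)"
    by (intro has_vector_derivative_real_field has_field_derivative_powr)
  moreover have "((\<lambda>x. complex_of_real (qpoly (Suc r) (frac x))) has_vector_derivative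
                   of_real (qpoly r (frac x))) (at x)"
    by (intro has_vector_derivative_of_real qpoly_Suc_frac_has_real_derivative assms(2))
  ultimately show ?thesis
    unfolding powr_qpoly_def by (auto dest: has_vector_derivative_mult simp: algebra_simps)
qed

lemma isCont_powr_qpoly_not_Ints:
  assumes "r \<ge> 1" and "x > 0" and "x \<notin> \<int>"
  shows "isCont (powr_qpoly \<beta> r) x"
proof -
  obtain s where "r = Suc s"
    using assms(1) by (cases r) auto
  then show ?thesis
    using assms(2,3) qpoly_Suc_frac_has_real_derivative[THEN DERIV_isCont]
    by (auto intro!: isCont_powr_qpoly)
qed

lemma borel_measurable_powr_qpoly_pos:
  assumes "r \<ge> 1"
  shows "(\<lambda>x. if 0 < x then powr_qpoly \<beta> r x else 0) \<in> borel_measurable borel"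
    (is "?f \<in> _")
proof (rule borel_measurable_continuous_countable_exceptions[OF countable_int])
  \<comment> \<open>The library's continuity of complex powers excludes the nonpositive reals, hence the truncation.\<close>
  show "continuous_on (- \<int>) ?f"
  proof (rule continuous_at_imp_continuous_on, safe)
    fix x :: real
    assume "x \<notin> \<int>"
    then consider "x > 0" | "x < 0"
      by (metis Ints_0 linorder_neqE_linordered_idom)
    then show "isCont ?f x"
    proof cases
      case 1
      have "\<forall>\<^sub>F y in nhds x. powr_qpoly \<beta> r y = ?f y"
        using eventually_nhds_in_open[of "{0<..}" x] 1 by (auto elim!: eventually_mono)
      then show ?thesis
        using isCont_cong[of "powr_qpoly \<beta> r" ?f x] isCont_powr_qpoly_not_Ints[OF assms 1 \<open>x \<notin> \<int>\<close>]
        by blast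
    next
      case 2
      have "\<forall>\<^sub>F y in nhds x. 0 = ?f y"
        using eventually_nhds_in_open[of "{..<0}" x] 2 by (auto elim!: eventually_mono)
      then show ?thesis
        using isCont_cong[of "\<lambda>_. 0" ?f x] by simp
    qed
  qed
qed

lemma locally_bounded_integrable_powr_qpoly:
  assumes "r \<ge> 1" and "Re \<beta> \<ge> 0"
  shows "locally_bounded_integrable (powr_qpoly \<beta> r)"
proof -
  obtain M where M: "\<And>x. \<bar>qpoly r (frac x)\<bar> \<le> M"
    using bounded_qpoly_frac[of r] by (auto simp: bounded_iff)
  have bounded: "bounded (powr_qpoly \<beta> r ` {0..X})" for X
  proof -
    have "norm (powr_qpoly \<beta> r x) \<le> X powr Re \<beta> * M" if "x \<in> {0..X}" for x
      using that assms(2) M[of x] by (auto simp: norm_powr_qpoly intro!: mult_mono powr_mono2)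
    then show ?thesis
      unfolding bounded_iff by blast
  qed
  define f where "f x = (if 0 < x then powr_qpoly \<beta> r x else 0)" for x
  have "bounded (f ` {0..X})" for X
  proof (rule bounded_subset)
    show "f ` {0..X} \<subseteq> insert 0 (powr_qpoly \<beta> r ` {0..X})"
      by (auto simp: f_def)
  qed (use bounded in simp)
  then have "f integrable_on {0..X}" for X
    using borel_measurable_powr_qpoly_pos[OF assms(1)]
    by (intro integrable_on_if_bounded_measurable) (simp_all add: f_def[abs_def])
  then have "powr_qpoly \<beta> r integrable_on {0..X}" for X
    by (rule integrable_spike_finite[of "{0}", rotated 2]) (auto simp: f_def)
  with bounded show ?thesis
    by (simp add: locally_bounded_integrable_def)
qed

lemma continuous_on_powr_qpoly:
  assumes "r \<ge> 2" and "a > 0"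
  shows "continuous_on {a..b} (powr_qpoly \<beta> r)"
proof -
  obtain n where "r = Suc (Suc n)"
    using assms(1) by (metis add_2_eq_Suc le_Suc_ex)
  then show ?thesis
    using assms(2)
    by (auto intro!: continuous_at_imp_continuous_on isCont_powr_qpoly isCont_qpoly_Suc_Suc_frac)
qed

lemma integral_powr_qpoly_by_parts:
  assumes "r \<ge> 1" and "1 \<le> X"
  shows "integral {1..X} (powr_qpoly \<beta> r) =
    powr_qpoly \<beta> (Suc r) X - powr_qpoly \<beta> (Suc r) 1 - \<beta> * integral {1..X} (powr_qpoly (\<beta> - 1) (Suc r))"
proof -
  have derivative: "((\<lambda>x. \<beta> * powr_qpoly (\<beta> - 1) (Suc r) x + powr_qpoly \<beta> r x) has_integral
          powr_qpoly \<beta> (Suc r) X - powr_qpoly \<beta> (Suc r) 1) {1..X}"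
  proof (rule fundamental_theorem_of_calculus_interior_strong[where S="of_int ` {1..\<lceil>X\<rceil>}"])
    show "continuous_on {1..X} (powr_qpoly \<beta> (Suc r))"
      using assms(1) by (intro continuous_on_powr_qpoly) auto
    fix x
    assume x: "x \<in> {1<..<X} - of_int ` {1..\<lceil>X\<rceil>}"
    have "x \<notin> \<int>"
    proof
      assume "x \<in> \<int>"
      then obtain m where "x = of_int m"
        by (auto elim: Ints_cases)
      with x have "m \<in> {1..\<lceil>X\<rceil>}"
        by (auto simp: le_ceiling_iff)
      with x \<open>x = of_int m\<close> show False
        by blast
    qed
    with x show "(powr_qpoly \<beta> (Suc r) has_vector_derivative
                   \<beta> * powr_qpoly (\<beta> - 1) (Suc r) x + powr_qpoly \<beta> r x) (at x)"
      by (intro powr_qpoly_has_vector_derivative) auto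
  qed (use assms(2) in auto)
  have "((\<lambda>x. \<beta> * powr_qpoly (\<beta> - 1) (Suc r) x) has_integral
                   \<beta> * integral {1..X} (powr_qpoly (\<beta> - 1) (Suc r))) {1..X}"
    using assms(1)
    by (intro has_integral_mult_right integrable_integral integrable_continuous_interval
        continuous_on_powr_qpoly) auto
  from has_integral_diff[OF derivative this]
  have "(powr_qpoly \<beta> r has_integral powr_qpoly \<beta> (Suc r) X - powr_qpoly \<beta> (Suc r) 1
          - \<beta> * integral {1..X} (powr_qpoly (\<beta> - 1) (Suc r))) {1..X}"
    by simp
  then show ?thesis
    by (rule integral_unique)
qed

lemma cesaroP_powr_qpoly_eq:
  assumes "r \<ge> 1" and "Re \<beta> \<ge> 0"
  obtains c where "\<And>X. X \<ge> 1 \<Longrightarrow> cesaroP (powr_qpoly \<beta> r) X =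
    c / of_real X + powr_qpoly (\<beta> - 1) (Suc r) X
    - \<beta> * (integral {1..X} (powr_qpoly (\<beta> - 1) (Suc r)) / of_real X)"
proof
  fix X :: real
  assume "X \<ge> 1"
  define c where "c = integral {0..1} (powr_qpoly \<beta> r) - powr_qpoly \<beta> (Suc r) 1"
  have "integral {0..X} (powr_qpoly \<beta> r) = integral {0..1} (powr_qpoly \<beta> r) + integral {1..X} (powr_qpoly \<beta> r)"
    using Henstock_Kurzweil_Integration.integral_combine[of 0 1 X "powr_qpoly \<beta> r"] \<open>X \<ge> 1\<close>
      locally_bounded_integrable_powr_qpoly[OF assms] by (simp add: locally_bounded_integrable_def)
  also have "\<dots> = c + powr_qpoly \<beta> (Suc r) X - \<beta> * integral {1..X} (powr_qpoly (\<beta> - 1) (Suc r))"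
    using integral_powr_qpoly_by_parts[OF assms(1) \<open>X \<ge> 1\<close>] by (simp add: c_def)
  finally show "cesaroP (powr_qpoly \<beta> r) X = c / of_real X + powr_qpoly (\<beta> - 1) (Suc r) X
      - \<beta> * (integral {1..X} (powr_qpoly (\<beta> - 1) (Suc r)) / of_real X)"
    using powr_qpoly_divide[of X \<beta> "Suc r"] \<open>X \<ge> 1\<close>
    by (simp add: cesaroP_def diff_divide_distrib add_divide_distrib)
qed

lemma cesaroP_powr_qpoly_tendsto_0:
  assumes "r \<ge> 1" and "0 \<le> Re \<beta>" and "Re \<beta> < 1"
  shows "(cesaroP (powr_qpoly \<beta> r) \<longlongrightarrow> 0) at_top"
proof -
  let ?g = "powr_qpoly (\<beta> - 1) (Suc r)"
  obtain c where c: "\<And>X. X \<ge> 1 \<Longrightarrow> cesaroP (powr_qpoly \<beta> r) X =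
      c / of_real X + ?g X - \<beta> * (integral {1..X} ?g / of_real X)"
    using cesaroP_powr_qpoly_eq[OF assms(1,2)] by blast
  have "(?g \<longlongrightarrow> 0) at_top"
    using assms(3) by (intro powr_qpoly_tendsto_0) simp
  moreover have "((\<lambda>X. integral {1..X} ?g / of_real X) \<longlongrightarrow> 0) at_top"
    using assms(1) \<open>(?g \<longlongrightarrow> 0) at_top\<close>
    by (intro integral_average_tendsto_0 integrable_continuous_interval continuous_on_powr_qpoly) auto
  ultimately have "((\<lambda>X. c / of_real X + ?g X - \<beta> * (integral {1..X} ?g / of_real X))
      \<longlongrightarrow> 0 + 0 - \<beta> * 0) at_top"
    by (intro tendsto_intros tendsto_divide_0[OF tendsto_const filterlim_of_real_at_infinity])
  then have "((\<lambda>X. c / of_real X + ?g X - \<beta> * (integral {1..X} ?g / of_real X)) \<longlongrightarrow> 0) at_top"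
    by simp
  then show ?thesis
  proof (rule Lim_transform_eventually)
    show "\<forall>\<^sub>F X in at_top. c / of_real X + ?g X - \<beta> * (integral {1..X} ?g / of_real X) =
        cesaroP (powr_qpoly \<beta> r) X"
      using eventually_ge_at_top[of 1] by eventually_elim (simp add: c)
  qed
qed

lemma cesaroP_powr_qpoly_remainder_tendsto_0:
  assumes "r \<ge> 1" and "Re \<beta> \<ge> 1"
  defines "g \<equiv> powr_qpoly (\<beta> - 1) (Suc r)"
  shows "((\<lambda>X. cesaroP (powr_qpoly \<beta> r) X - (g X - \<beta> * cesaroP g X)) \<longlongrightarrow> 0) at_top"
proof -
  obtain c where c: "\<And>X. X \<ge> 1 \<Longrightarrow> cesaroP (powr_qpoly \<beta> r) X =
      c / of_real X + g X - \<beta> * (integral {1..X} g / of_real X)"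
    using cesaroP_powr_qpoly_eq[of r \<beta>] assms by (auto simp: g_def)
  have remainder: "(c + \<beta> * integral {0..1} g) / of_real X = cesaroP (powr_qpoly \<beta> r) X - (g X - \<beta> * cesaroP g X)"
    if "X \<ge> 1" for X
  proof -
    have "integral {0..1} g + integral {1..X} g = integral {0..X} g"
      using Henstock_Kurzweil_Integration.integral_combine[of 0 1 X g] that
        locally_bounded_integrable_powr_qpoly[of "Suc r" "\<beta> - 1"] assms(2)
      by (simp add: g_def locally_bounded_integrable_def)
    then have "integral {1..X} g = integral {0..X} g - integral {0..1} g"
      by (simp add: algebra_simps)
    then show ?thesis
      unfolding c[OF that] by (simp add: cesaroP_def diff_divide_distrib add_divide_distrib right_diff_distrib)
  qed
  have "\<forall>\<^sub>F X in at_top. (c + \<beta> * integral {0..1} g) / of_real X =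
      cesaroP (powr_qpoly \<beta> r) X - (g X - \<beta> * cesaroP g X)"
    using eventually_ge_at_top[of 1] by eventually_elim (rule remainder)
  then show ?thesis
    by (rule Lim_transform_eventually[OF tendsto_divide_0[OF tendsto_const filterlim_of_real_at_infinity]])
qed

lemma cesaroP_powr_qpoly_decomposition:
  assumes "r \<ge> 1" and "Re \<beta> \<ge> 1"
  defines "g \<equiv> powr_qpoly (\<beta> - 1) (Suc r)"
  obtains w where "locally_bounded_integrable w" and "(w \<longlongrightarrow> 0) at_top"
    and "cesaroP (powr_qpoly \<beta> r) = (\<lambda>X. g X + ((- \<beta>) * cesaroP g X + w X))"
proof
  define w where "w X = cesaroP (powr_qpoly \<beta> r) X + ((-1) * g X + \<beta> * cesaroP g X)" for X
  have g: "locally_bounded_integrable g"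
    unfolding g_def using assms by (intro locally_bounded_integrable_powr_qpoly) auto
  show "locally_bounded_integrable w"
    using assms unfolding w_def[abs_def]
    by (intro locally_bounded_integrable_add locally_bounded_integrable_cmult
        locally_bounded_integrable_cesaroP locally_bounded_integrable_powr_qpoly g) auto
  show "(w \<longlongrightarrow> 0) at_top"
    using cesaroP_powr_qpoly_remainder_tendsto_0[OF assms(1,2)]
    by (simp add: w_def[abs_def] g_def algebra_simps)
  show "cesaroP (powr_qpoly \<beta> r) = (\<lambda>X. g X + ((- \<beta>) * cesaroP g X + w X))"
    by (simp add: w_def)
qed

lemma funpow_cesaroP_powr_qpoly_tendsto_0:
  assumes "r \<ge> 1" and "0 \<le> Re \<beta>" and "Re \<beta> < real n"
  shows "((cesaroP ^^ n) (powr_qpoly \<beta> r) \<longlongrightarrow> 0) at_top"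
  using assms
proof (induction n arbitrary: \<beta> r)
  case (Suc k)
  have unfold_Suc: "(cesaroP ^^ Suc k) (powr_qpoly \<beta> r) = (cesaroP ^^ k) (cesaroP (powr_qpoly \<beta> r))"
    by (simp add: funpow_swap1)
  show ?case
  proof (cases "Re \<beta> < 1")
    case True
    with Suc.prems have "(cesaroP (powr_qpoly \<beta> r) \<longlongrightarrow> 0) at_top"
      by (intro cesaroP_powr_qpoly_tendsto_0) auto
    then show ?thesis
      unfolding unfold_Suc using Suc.prems
      by (intro funpow_cesaroP_tendsto_0 locally_bounded_integrable_cesaroP
          locally_bounded_integrable_powr_qpoly) auto
  next
    case False
    let ?g = "powr_qpoly (\<beta> - 1) (Suc r)"
    obtain w where w: "locally_bounded_integrable w" "(w \<longlongrightarrow> 0) at_top"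
      and decomposition: "cesaroP (powr_qpoly \<beta> r) = (\<lambda>X. ?g X + ((- \<beta>) * cesaroP ?g X + w X))"
      using cesaroP_powr_qpoly_decomposition[of r \<beta>] Suc.prems False by auto
    have "((cesaroP ^^ k) ?g \<longlongrightarrow> 0) at_top"
      using Suc False by simp
    with w False have "((cesaroP ^^ k) (\<lambda>X. ?g X + ((- \<beta>) * cesaroP ?g X + w X)) \<longlongrightarrow> 0) at_top"
      by (intro funpow_cesaroP_perturbed_tendsto_0 locally_bounded_integrable_powr_qpoly) auto
    then show ?thesis
      unfolding unfold_Suc decomposition .
  qed
qed simp

theorem mainTheorem2:
  fixes \<delta> :: complex and r :: nat
  assumes "\<delta> \<noteq> 0" and "Re \<delta> \<ge> 0" and "r \<ge> 1"
  shows "(((cesaroP ^^ (nat \<lfloor>Re \<delta>\<rfloor> + 1))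
            (\<lambda>X. (of_real X) powr \<delta> * of_real (qpoly r (frac X))))
          \<longlongrightarrow> 0) at_top"
proof -
  have "((cesaroP ^^ (nat \<lfloor>Re \<delta>\<rfloor> + 1)) (powr_qpoly \<delta> r) \<longlongrightarrow> 0) at_top"
    using assms(2,3) by (intro funpow_cesaroP_powr_qpoly_tendsto_0) linarith+
  then show ?thesis
    by (simp add: powr_qpoly_def[abs_def])
qed

end
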